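(* The set $\mathscr Q=\mathbb Q\cap[0,1]$ is $R$-invariant, i.e. $R(\mathscr Q)\subset\mathscr Q$. The only periodic orbits of $R$ contained in $\mathscr Q$ are $C_0=\{0,2/3\}$ and $C_1=\{1,1/3\}$ (both of period $2$). Moreover $\mathscr Q=\mathscr Q_0\cup\mathscr Q_1$ is a disjoint union, where $\mathscr Q_i$ is the set of $x\in\mathscr Q$ whose forward $R$-orbit contains $C_i$, and both $\mathscr Q_0$ and $\mathscr Q_1$ are dense in $[0,1]$.
   Context: Define $\rho$ on binary words: for $b=b_1b_2\dots$, $\rho(b)$ is obtained by deleting every digit $b_n=0$ and replacing every $b_n=1$ by $0$ if $n$ is odd and by $1$ if $n$ is even. For $x\in(0,1]$ let $\beta(x)$ be the unique binary expansion of $x$ with infinitely many $1$'s. Define $R:[0,1]\to[0,1]$ by $R(0)=2/3$ and, for $x\in(0,1]$, $R(x)=\sum_{n\ge1}c_n2^{-n}$ where $c=\rho(\beta(x))$. *)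

theory Defs
  imports "HOL-Analysis.Analysis" "HOL-Library.Infinite_Set"
begin

text \<open>Binary words are indexed from 0: the word b_1 b_2 ... is represented by
  b :: nat => bool with b i = (b_{i+1} = 1). Hence the paper's position n = i+1
  is odd iff i is even.\<close>

definition bin_val :: "(nat \<Rightarrow> bool) \<Rightarrow> real" where
  "bin_val b = (\<Sum>i. if b i then 1 / 2 ^ Suc i else 0)"

definition beta :: "real \<Rightarrow> (nat \<Rightarrow> bool)" where
  "beta x = (THE b. infinite {i. b i} \<and> (\<lambda>i. if b i then 1 / 2 ^ Suc i else 0) sums x)"

text \<open>rho on infinite words with infinitely many 1's: delete the 0 digits, and
  replace the 1 at (1-based) position n by 0 if n is odd and by 1 if n is even.
  The k-th digit of the result comes from the k-th 1 of b, at 0-based index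
  enumerate {i. b i} k, i.e. 1-based position (that index + 1); it is 1 iff that
  position is even, i.e. iff the 0-based index is odd.\<close>
definition rho :: "(nat \<Rightarrow> bool) \<Rightarrow> (nat \<Rightarrow> bool)" where
  "rho b = (\<lambda>k. odd (enumerate {i. b i} k))"

definition R :: "real \<Rightarrow> real" where
  "R x = (if x = 0 then 2/3 else bin_val (rho (beta x)))"

definition QQ :: "real set" where
  "QQ = {x. x \<in> \<rat> \<and> 0 \<le> x \<and> x \<le> 1}"

definition orbit :: "real \<Rightarrow> real set" where
  "orbit x = {(R ^^ k) x | k. True}"

definition C0 :: "real set" where "C0 = {0, 2/3}"
definition C1 :: "real set" where "C1 = {1, 1/3}"

definition QQ0 :: "real set" where "QQ0 = {x \<in> QQ. C0 \<subseteq> orbit x}"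
definition QQ1 :: "real set" where "QQ1 = {x \<in> QQ. C1 \<subseteq> orbit x}"

end

theory Submission
  imports Defs
begin

text \<open>The binary expansion of a rational number is eventually periodic, and \<open>rho\<close> turns a word
  with preperiod \<open>N\<close> and period \<open>p\<close> containing \<open>K\<close> 1's into a word with preperiod at most \<open>N\<close>
  and period \<open>K\<close> (if \<open>p\<close> is even) or \<open>2 K\<close> with \<open>K\<close> 1's (if \<open>p\<close> is odd); so \<open>R\<close> preserves
  rationals. Along the orbit of a rational the number of 1's per period never grows, and
  together with the parity of the period and the preperiod it gives a lexicographic measure that
  decreases until the orbit reaches \<open>0\<close> or \<open>1\<close>, i.e. one of the 2-cycles \<open>C0\<close>, \<open>C1\<close>. These are
  disjoint, so every rational lies in exactly one of \<open>QQ0\<close>, \<open>QQ1\<close>, and a periodic rational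
  lies on the cycle it falls into.

  For density, every finite prefix \<open>u\<close> is realised in each class: if \<open>y\<close> is in the class and its
  expansion starts with the digits \<open>rho\<close> produces from \<open>u\<close>, then extending \<open>u\<close> by 1's at
  positions of suitable parity gives a rational preimage of \<open>y\<close> under \<open>R\<close> starting with \<open>u\<close>.
  The prefix produced by \<open>rho\<close> is shorter than \<open>u\<close> or no longer all 1's, which drives an
  induction.\<close>

section \<open>Binary expansions\<close>

definition bin_term :: "(nat \<Rightarrow> bool) \<Rightarrow> nat \<Rightarrow> real" where
  "bin_term b i = (if b i then 1 / 2 ^ Suc i else 0)"

definition shift_word :: "nat \<Rightarrow> (nat \<Rightarrow> bool) \<Rightarrow> nat \<Rightarrow> bool" where
  "shift_word n b = (\<lambda>i. b (i + n))"

lemma shift_word_apply [simp]: "shift_word n b i = b (i + n)"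
  by (simp add: shift_word_def)

lemma bin_term_nonneg: "0 \<le> bin_term b i"
  by (simp add: bin_term_def)

lemma bin_term_le: "bin_term b i \<le> (1/2) ^ Suc i"
  by (simp add: bin_term_def power_one_over)

lemma half_power_sums: "(\<lambda>i. (1/2::real) ^ Suc i) sums 1"
  using sums_mult[OF geometric_sums[of "1/2::real"], of "1/2"] by simp

lemma summable_bin_term: "summable (bin_term b)"
  by (rule summable_comparison_test'[of "\<lambda>i. (1/2::real) ^ Suc i" 0])
     (use half_power_sums bin_term_le bin_term_nonneg in \<open>auto simp: sums_iff\<close>)

lemma bin_val_eq_suminf: "bin_val b = suminf (bin_term b)"
  by (simp add: bin_val_def bin_term_def[abs_def])

lemma sums_bin_val: "bin_term b sums bin_val b"
  by (simp add: bin_val_eq_suminf summable_sums summable_bin_term)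

lemma bin_val_nonneg: "0 \<le> bin_val b"
  unfolding bin_val_eq_suminf by (rule suminf_nonneg[OF summable_bin_term bin_term_nonneg])

lemma bin_val_le_1: "bin_val b \<le> 1"
proof -
  have "suminf (bin_term b) \<le> (\<Sum>i. (1/2::real) ^ Suc i)"
    by (rule suminf_le) (use bin_term_le summable_bin_term half_power_sums in \<open>auto simp: sums_iff\<close>)
  thus ?thesis using half_power_sums unfolding bin_val_eq_suminf by (simp add: sums_iff)
qed

lemma bin_val_True: "bin_val (\<lambda>_. True) = 1"
  using half_power_sums by (simp add: bin_val_def power_one_over sums_iff)

lemma bin_val_False: "bin_val (\<lambda>_. False) = 0"
  by (simp add: bin_val_def)

lemma bin_val_pos: "b i \<Longrightarrow> 0 < bin_val b"
  unfolding bin_val_eq_suminf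
  by (rule suminf_pos2[OF summable_bin_term bin_term_nonneg, of _ i]) (simp add: bin_term_def)

lemma bin_val_split:
  "bin_val b = (\<Sum>i<n. bin_term b i) + bin_val (shift_word n b) / 2 ^ n"
proof -
  have "(\<lambda>i. bin_term b (i + n)) = (\<lambda>i. bin_term (shift_word n b) i / 2 ^ n)"
    by (auto simp: bin_term_def power_add fun_eq_iff)
  thus ?thesis
    using suminf_split_initial_segment[OF summable_bin_term, of b n]
          suminf_divide[OF summable_bin_term, of "shift_word n b" "2 ^ n"]
    by (simp add: bin_val_eq_suminf)
qed

lemma bin_val_split_1: "bin_val b = (if b 0 then 1/2 else 0) + bin_val (shift_word 1 b) / 2"
  using bin_val_split[of b 1] by (simp add: bin_term_def)

lemma infinite_shift_word: "infinite {i. b i} \<Longrightarrow> infinite {i. shift_word n b i}"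
proof
  assume inf: "infinite {i. b i}" and fin: "finite {i. shift_word n b i}"
  have "{i. b i} \<subseteq> {..<n} \<union> (\<lambda>i. i + n) ` {i. shift_word n b i}"
  proof
    fix i assume "i \<in> {i. b i}"
    thus "i \<in> {..<n} \<union> (\<lambda>i. i + n) ` {i. shift_word n b i}"
      by (cases "i < n") (auto simp: image_iff intro!: exI[of _ "i - n"])
  qed
  thus False using inf fin finite_subset by blast
qed

lemma first_digit_iff:
  assumes "infinite {i. b i}"
  shows "b 0 \<longleftrightarrow> 1/2 < bin_val b"
proof -
  have "0 < bin_val (shift_word 1 b)"
    using not_finite_existsD[OF infinite_shift_word[OF assms]] bin_val_pos by blast
  thus ?thesis using bin_val_le_1[of "shift_word 1 b"] bin_val_split_1[of b] by auto
qed

lemma bin_val_inj: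
  assumes "infinite {i. b i}" "infinite {i. c i}" "bin_val b = bin_val c"
  shows "b = c"
proof
  fix n show "b n = c n"
    using assms
  proof (induction n arbitrary: b c)
    case 0
    then show ?case using first_digit_iff[of b] first_digit_iff[of c] by simp
  next
    case (Suc n)
    have "b 0 = c 0" using Suc.prems first_digit_iff[of b] first_digit_iff[of c] by simp
    hence "bin_val (shift_word 1 b) = bin_val (shift_word 1 c)"
      using bin_val_split_1[of b] bin_val_split_1[of c] Suc.prems(3) by auto
    hence "shift_word 1 b n = shift_word 1 c n"
      using Suc.IH infinite_shift_word Suc.prems(1,2) by metis
    thus ?case by simp
  qed
qed

lemma beta_eqI: "infinite {i. b i} \<Longrightarrow> bin_val b = x \<Longrightarrow> beta x = b"
  unfolding beta_def
proof (rule the_equality)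
  assume "infinite {i. b i}" "bin_val b = x"
  thus "infinite {i. b i} \<and> (\<lambda>i. if b i then 1 / 2 ^ Suc i else 0) sums x"
    using sums_bin_val[of b] by (simp add: bin_term_def[abs_def])
next
  fix c assume "infinite {i. b i}" "bin_val b = x"
    "infinite {i. c i} \<and> (\<lambda>i. if c i then 1 / 2 ^ Suc i else (0::real)) sums x"
  thus "c = b" using bin_val_inj[of c b] by (simp add: bin_val_def sums_iff)
qed

definition doubling :: "real \<Rightarrow> real" where
  "doubling r = (if 1/2 < r then 2 * r - 1 else 2 * r)"

definition greedy_digits :: "real \<Rightarrow> nat \<Rightarrow> bool" where
  "greedy_digits x i \<longleftrightarrow> 1/2 < (doubling ^^ i) x"

lemma doubling_iter_bounds: "0 < x \<Longrightarrow> x \<le> 1 \<Longrightarrow> 0 < (doubling ^^ n) x \<and> (doubling ^^ n) x \<le> 1"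
  by (induction n) (auto simp: doubling_def)

lemma greedy_digits_partial_sum:
  "x = (\<Sum>i<n. bin_term (greedy_digits x) i) + (doubling ^^ n) x / 2 ^ n"
proof (induction n)
  case (Suc n)
  have "(doubling ^^ n) x / 2 ^ n
      = bin_term (greedy_digits x) n + (doubling ^^ Suc n) x / 2 ^ Suc n"
    by (auto simp: bin_term_def greedy_digits_def doubling_def field_simps)
  thus ?case using Suc by simp
qed simp

lemma sums_greedy_digits:
  assumes "0 < x" "x \<le> 1"
  shows "bin_term (greedy_digits x) sums x"
proof -
  have "(\<lambda>n. (doubling ^^ n) x / 2 ^ n) \<longlonglongrightarrow> 0"
  proof (rule tendsto_sandwich[of "\<lambda>_. 0" _ _ "\<lambda>n. (1/2::real) ^ n"])
    show "\<forall>\<^sub>F n in sequentially. 0 \<le> (doubling ^^ n) x / 2 ^ n"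
      using doubling_iter_bounds[OF assms] by (auto intro!: always_eventually less_imp_le)
    show "\<forall>\<^sub>F n in sequentially. (doubling ^^ n) x / 2 ^ n \<le> (1/2) ^ n"
      using doubling_iter_bounds[OF assms]
      by (auto intro!: always_eventually simp: power_one_over divide_right_mono)
  qed (auto intro: LIMSEQ_realpow_zero)
  hence "(\<lambda>n. x - (doubling ^^ n) x / 2 ^ n) \<longlonglongrightarrow> x"
    using tendsto_diff[OF tendsto_const[of x]] by fastforce
  moreover have "(\<lambda>n. x - (doubling ^^ n) x / 2 ^ n) = (\<lambda>n. \<Sum>i<n. bin_term (greedy_digits x) i)"
    using greedy_digits_partial_sum[of x] by (auto simp: fun_eq_iff algebra_simps)
  ultimately show ?thesis by (simp add: sums_def)
qed

text \<open>A tail of greedy digits 0 would double the remainder forever, pushing it above 1.\<close>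
lemma infinite_greedy_digits:
  assumes x: "0 < x" "x \<le> 1"
  shows "infinite {i. greedy_digits x i}"
proof
  assume "finite {i. greedy_digits x i}"
  then obtain N where N: "\<And>i. N \<le> i \<Longrightarrow> \<not> greedy_digits x i"
    by (metis finite_nat_set_iff_bounded mem_Collect_eq not_le)
  have doubled: "(doubling ^^ (N + k)) x = 2 ^ k * (doubling ^^ N) x" for k
  proof (induction k)
    case (Suc k)
    have "\<not> 1/2 < (doubling ^^ (N + k)) x" using N[of "N + k"] by (simp add: greedy_digits_def)
    hence "(doubling ^^ Suc (N + k)) x = 2 * (doubling ^^ (N + k)) x"
      unfolding funpow.simps o_apply doubling_def by simp
    thus ?case using Suc by simp
  qed simp
  have pos: "0 < (doubling ^^ N) x" using doubling_iter_bounds[OF x] by simp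
  obtain k where "1 / (doubling ^^ N) x < 2 ^ k" using real_arch_pow[of "2::real"] by auto
  hence "1 < 2 ^ k * (doubling ^^ N) x" using pos by (simp add: field_simps)
  thus False using doubled[of k] doubling_iter_bounds[OF x, of "N + k"] by simp
qed

lemma beta_eq_greedy_digits: "0 < x \<Longrightarrow> x \<le> 1 \<Longrightarrow> beta x = greedy_digits x"
  using beta_eqI infinite_greedy_digits sums_greedy_digits sums_bin_val sums_unique2 by metis

lemma infinite_beta: "0 < x \<Longrightarrow> x \<le> 1 \<Longrightarrow> infinite {i. beta x i}"
  by (simp add: beta_eq_greedy_digits infinite_greedy_digits)

lemma bin_val_beta: "0 < x \<Longrightarrow> x \<le> 1 \<Longrightarrow> bin_val (beta x) = x"
  using beta_eq_greedy_digits sums_greedy_digits sums_bin_val sums_unique2 by metis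

text \<open>For \<open>x = a/q\<close> the remainders \<open>(doubling ^^ n) x\<close> are multiples of \<open>1/q\<close> in \<open>(0, 1]\<close>.\<close>
lemma finite_doubling_orbit:
  assumes x: "x \<in> \<rat>" "0 < x" "x \<le> 1"
  shows "finite (range (\<lambda>n. (doubling ^^ n) x))"
proof -
  obtain a q where q: "0 < q" "x = of_int a / of_int q"
    using x(1) by (cases rule: Rats_cases') blast
  have ints: "(doubling ^^ n) x * of_int q \<in> \<int>" for n
  proof (induction n)
    case (Suc n)
    hence "2 * ((doubling ^^ n) x * of_int q) - of_int q \<in> \<int>"
          "2 * ((doubling ^^ n) x * of_int q) \<in> \<int>"
      by (auto intro: Ints_diff Ints_mult)
    thus ?case by (auto simp: doubling_def[of "(doubling ^^ n) x"] algebra_simps)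
  qed (use q in simp)
  have "range (\<lambda>n. (doubling ^^ n) x) \<subseteq> (\<lambda>k. of_int k / of_int q) ` {0..q}"
  proof clarify
    fix n
    obtain k where k: "(doubling ^^ n) x * of_int q = of_int k"
      using ints[of n] by (auto elim: Ints_cases)
    have r: "0 < (doubling ^^ n) x" "(doubling ^^ n) x \<le> 1"
      using doubling_iter_bounds[OF x(2,3)] by auto
    have "0 < real_of_int k" using k q(1) r(1) by (metis mult_pos_pos of_int_0_less_iff)
    moreover have "real_of_int k \<le> of_int q"
      using k q(1) mult_right_mono[OF r(2), of "of_int q"] by simp
    ultimately have "0 \<le> k \<and> k \<le> q" by simp
    moreover have "(doubling ^^ n) x = of_int k / of_int q" using k q(1) by (simp add: field_simps)
    ultimately show "(doubling ^^ n) x \<in> (\<lambda>k. of_int k / of_int q) ` {0..q}" by auto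
  qed
  thus ?thesis by (rule finite_subset) simp
qed

section \<open>Eventually periodic words and the map \<open>rho\<close>\<close>

definition periodic_from :: "(nat \<Rightarrow> bool) \<Rightarrow> nat \<Rightarrow> nat \<Rightarrow> bool" where
  "periodic_from b N p \<longleftrightarrow> 0 < p \<and> (\<forall>i\<ge>N. b (i + p) = b i)"

lemma periodic_from_beta_Rats:
  assumes x: "x \<in> \<rat>" "0 < x" "x \<le> 1"
  shows "\<exists>N p. periodic_from (beta x) N p"
proof -
  have "\<not> inj (\<lambda>n. (doubling ^^ n) x)"
    using finite_doubling_orbit[OF x] range_inj_infinite by blast
  then obtain m n where "m \<noteq> n" "(doubling ^^ m) x = (doubling ^^ n) x"
    by (auto simp: inj_def)
  then obtain m n where mn: "m < n" "(doubling ^^ m) x = (doubling ^^ n) x"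
    by (metis linorder_neqE_nat)
  have same: "(doubling ^^ (k + m)) x = (doubling ^^ (k + n)) x" for k
    using mn(2) by (simp add: funpow_add)
  have "periodic_from (greedy_digits x) m (n - m)"
    unfolding periodic_from_def
  proof (intro conjI allI impI)
    fix i assume "m \<le> i"
    hence "i = (i - m) + m" "i + (n - m) = (i - m) + n" using mn(1) by simp_all
    thus "greedy_digits x (i + (n - m)) = greedy_digits x i"
      using same[of "i - m"] by (simp add: greedy_digits_def)
  qed (use mn in simp)
  thus ?thesis using beta_eq_greedy_digits[OF x(2,3)] by auto
qed

lemma bin_val_periodic_Rats:
  assumes "periodic_from b N p"
  shows "bin_val b \<in> \<rat>"
proof -
  define c where "c = shift_word N b"
  have p: "0 < p" using assms by (simp add: periodic_from_def)
  have "shift_word p c = c"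
  proof
    fix i have "b (i + N + p) = b (i + N)" using assms by (simp add: periodic_from_def)
    thus "shift_word p c i = c i" by (simp add: c_def add_ac)
  qed
  hence "bin_val c = (\<Sum>i<p. bin_term c i) + bin_val c / 2 ^ p"
    using bin_val_split[of c p] by simp
  moreover have "(1::real) < 2 ^ p" using p by (simp add: one_less_power)
  ultimately have "bin_val c = (\<Sum>i<p. bin_term c i) * 2 ^ p / (2 ^ p - 1)"
    by (simp add: field_simps)
  moreover have rat: "bin_term b' i \<in> \<rat>" for b' i
    by (simp add: bin_term_def)
  ultimately have "bin_val c \<in> \<rat>" by (simp add: Rats_sum)
  thus ?thesis
    using bin_val_split[of b N] Rats_sum[of "{..<N}" "bin_term b", OF rat] by (simp add: c_def)
qed

definition ones_below :: "(nat \<Rightarrow> bool) \<Rightarrow> nat \<Rightarrow> nat" where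
  "ones_below b n = card {i. i < n \<and> b i}"

definition ones_in :: "(nat \<Rightarrow> bool) \<Rightarrow> nat \<Rightarrow> nat \<Rightarrow> nat" where
  "ones_in b s p = ones_below b (s + p) - ones_below b s"

lemma ones_below_0 [simp]: "ones_below b 0 = 0"
  by (simp add: ones_below_def)

lemma ones_below_Suc: "ones_below b (Suc n) = ones_below b n + (if b n then 1 else 0)"
proof -
  have "{i. i < Suc n \<and> b i} = {i. i < n \<and> b i} \<union> (if b n then {n} else {})"
    by (auto simp: less_Suc_eq)
  thus ?thesis by (simp add: ones_below_def)
qed

lemma ones_below_add_bounds:
  "ones_below b a \<le> ones_below b (a + d) \<and> ones_below b (a + d) \<le> ones_below b a + d"
  by (induction d) (auto simp: ones_below_Suc)

lemma ones_below_mono: "m \<le> n \<Longrightarrow> ones_below b m \<le> ones_below b n"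
  using ones_below_add_bounds[of b m "n - m"] by simp

lemma ones_below_le: "ones_below b n \<le> n"
  using ones_below_add_bounds[of b 0 n] by simp

lemma ones_below_less: "i < n \<Longrightarrow> \<not> b i \<Longrightarrow> ones_below b n < n"
  using ones_below_add_bounds[of b "Suc i" "n - Suc i"] ones_below_le[of b i]
  by (simp add: ones_below_Suc) linarith

lemma ones_in_le: "ones_in b s p \<le> p"
  using ones_below_add_bounds[of b s p] unfolding ones_in_def by linarith

lemma ones_in_1: "ones_in b s (Suc 0) = (if b s then 1 else 0)"
  by (simp add: ones_in_def ones_below_Suc)

lemma ones_below_enumerate:
  assumes "infinite {i. b i}"
  shows "ones_below b (enumerate {i. b i} k) = k"
proof -
  have "{i. i < enumerate {i. b i} k \<and> b i} = enumerate {i. b i} ` {..<k}"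
  proof
    show "{i. i < enumerate {i. b i} k \<and> b i} \<subseteq> enumerate {i. b i} ` {..<k}"
    proof clarify
      fix i assume i: "i < enumerate {i. b i} k" "b i"
      then obtain j where "enumerate {i. b i} j = i" using enumerate_Ex[OF assms] by blast
      thus "i \<in> enumerate {i. b i} ` {..<k}" using i assms by auto
    qed
    show "enumerate {i. b i} ` {..<k} \<subseteq> {i. i < enumerate {i. b i} k \<and> b i}"
      using enumerate_in_set[OF assms] assms by auto
  qed
  thus ?thesis using inj_enumerate[OF assms]
    by (simp add: ones_below_def card_image inj_on_subset)
qed

lemma enumerate_ones_below:
  assumes "infinite {i. b i}" "b s"
  shows "enumerate {i. b i} (ones_below b s) = s"
  using enumerate_Ex[OF assms(1), of s] ones_below_enumerate[OF assms(1)] assms(2) by auto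

lemma ones_below_periodic:
  assumes "periodic_from b N p" "N \<le> s"
  shows "ones_below b (s + p) = ones_below b s + ones_in b N p"
  using assms(2)
proof (induction s rule: dec_induct)
  case base
  then show ?case using ones_below_add_bounds[of b N p] unfolding ones_in_def by linarith
next
  case (step s)
  have "b (s + p) = b s" using assms(1) step.hyps by (simp add: periodic_from_def)
  thus ?case using step.IH by (simp add: ones_below_Suc)
qed

lemma periodic_from_no_ones:
  assumes "periodic_from b N p" "ones_in b N p = 0" "N \<le> i"
  shows "\<not> b i"
proof
  assume "b i"
  hence "ones_below b i < ones_below b (Suc i)" by (simp add: ones_below_Suc)
  also have "\<dots> \<le> ones_below b (i + p)"
    using assms(1) by (intro ones_below_mono) (simp add: periodic_from_def)
  finally show False using ones_below_periodic[OF assms(1,3)] assms(2) by simp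
qed

lemma periodic_from_all_ones:
  assumes "periodic_from b N p" "ones_in b N p = p" "N \<le> i"
  shows "b i"
proof (rule ccontr)
  assume "\<not> b i"
  hence "ones_below b (Suc i + (p - 1)) \<le> ones_below b i + (p - 1)"
    using ones_below_add_bounds[of b "Suc i" "p - 1"] by (simp add: ones_below_Suc)
  moreover have "Suc i + (p - 1) = i + p" using assms(1) by (simp add: periodic_from_def)
  ultimately show False
    using ones_below_periodic[OF assms(1,3)] assms(1,2) by (simp add: periodic_from_def)
qed

lemma ones_in_pos:
  assumes "periodic_from b N p" "infinite {i. b i}"
  shows "0 < ones_in b N p"
proof (rule ccontr)
  assume "\<not> 0 < ones_in b N p"
  hence "\<forall>i\<ge>N. \<not> b i" using periodic_from_no_ones[OF assms(1)] by simp
  hence "{i. b i} \<subseteq> {..<N}" using not_le by blast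
  thus False using assms(2) finite_subset by blast
qed

lemma infinite_ones_periodic:
  assumes "periodic_from b N p" "0 < ones_in b N p"
  shows "infinite {i. b i}"
  unfolding infinite_nat_iff_unbounded_le
proof
  fix m
  show "\<exists>n\<ge>m. n \<in> {i. b i}"
  proof (rule ccontr)
    assume "\<not> (\<exists>n\<ge>m. n \<in> {i. b i})"
    hence "ones_below b (max m N + d) = ones_below b (max m N)" for d
      by (induction d) (auto simp: ones_below_Suc)
    hence "ones_below b (max m N + p) = ones_below b (max m N)" .
    thus False using ones_below_periodic[OF assms(1), of "max m N"] assms(2) by simp
  qed
qed

lemma enumerate_add_ones_in:
  assumes inf: "infinite {i. b i}" and per: "periodic_from b N p" and k: "ones_below b N \<le> k"
  shows "enumerate {i. b i} (k + ones_in b N p) = enumerate {i. b i} k + p"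
proof -
  define s where "s = enumerate {i. b i} k"
  have s: "b s" "ones_below b s = k"
    using enumerate_in_set[OF inf] ones_below_enumerate[OF inf] by (simp_all add: s_def)
  have "N \<le> s"
  proof (rule ccontr)
    assume "\<not> N \<le> s"
    hence "ones_below b (Suc s) \<le> ones_below b N" by (intro ones_below_mono) simp
    thus False using k s by (simp add: ones_below_Suc)
  qed
  hence "b (s + p)" "ones_below b (s + p) = k + ones_in b N p"
    using per s ones_below_periodic[OF per] by (simp_all add: periodic_from_def)
  thus ?thesis using enumerate_ones_below[OF inf] s_def by metis
qed

lemma rho_add_ones_in:
  assumes "infinite {i. b i}" "periodic_from b N p" "ones_below b N \<le> k"
  shows "rho b (k + ones_in b N p) = (if even p then rho b k else \<not> rho b k)"
  using enumerate_add_ones_in[OF assms] by (simp add: rho_def)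

lemma periodic_from_rho_even:
  assumes inf: "infinite {i. b i}" and per: "periodic_from b N p" and "even p"
  shows "periodic_from (rho b) (ones_below b N) (ones_in b N p)"
  using rho_add_ones_in[OF inf per] assms(3) ones_in_pos[OF per inf]
  by (simp add: periodic_from_def)

lemma periodic_from_rho_odd:
  assumes inf: "infinite {i. b i}" and per: "periodic_from b N p" and "odd p"
  defines "K \<equiv> ones_in b N p" and "c \<equiv> ones_below b N"
  shows "periodic_from (rho b) c (2 * K) \<and> ones_in (rho b) c (2 * K) = K"
proof -
  have flip: "rho b (k + K) = (\<not> rho b k)" if "c \<le> k" for k
    using rho_add_ones_in[OF inf per] that assms(3) by (simp add: K_def c_def)
  have "periodic_from (rho b) c (2 * K)"
    unfolding periodic_from_def
  proof (intro conjI allI impI)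
    show "0 < 2 * K" using ones_in_pos[OF per inf] by (simp add: K_def)
    fix i assume "c \<le> i"
    thus "rho b (i + 2 * K) = rho b i" using flip[of i] flip[of "i + K"] by (simp add: mult_2 add.assoc)
  qed
  moreover have alternating: "ones_below (rho b) (c + K + j) + ones_below (rho b) (c + j)
      = ones_below (rho b) (c + K) + ones_below (rho b) c + j" for j
  proof (induction j)
    case (Suc j)
    have "rho b (c + K + j) = (\<not> rho b (c + j))" using flip[of "c + j"] by (simp add: add_ac)
    thus ?case using Suc by (cases "rho b (c + j)") (simp_all add: ones_below_Suc)
  qed simp
  have "ones_below (rho b) (c + 2 * K) = ones_below (rho b) c + K"
    using alternating[of K] by (simp add: mult_2 add_ac)
  hence "ones_in (rho b) c (2 * K) = K" by (simp add: ones_in_def)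
  ultimately show ?thesis ..
qed

section \<open>Every rational orbit reaches a 2-cycle\<close>

lemma R_bounds: "0 \<le> R x \<and> R x \<le> 1"
  by (simp add: R_def bin_val_nonneg bin_val_le_1)

lemma beta_R: "0 < x \<Longrightarrow> infinite {i. rho (beta x) i} \<Longrightarrow> beta (R x) = rho (beta x)"
  by (simp add: R_def beta_eqI)

lemma beta_trailing_one:
  "beta (bin_val (\<lambda>i. if i < j then w i else i = j)) = (\<lambda>i. if i < j then w i else j < i)"
proof (rule beta_eqI)
  have "{Suc j..} \<subseteq> {i. if i < j then w i else j < i}" by auto
  thus "infinite {i. if i < j then w i else j < i}" using infinite_Ici finite_subset by blast
  have "shift_word (Suc j) (\<lambda>i. if i < j then w i else i = j) = (\<lambda>_. False)"
       "shift_word (Suc j) (\<lambda>i. if i < j then w i else j < i) = (\<lambda>_. True)"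
    by auto
  thus "bin_val (\<lambda>i. if i < j then w i else j < i) = bin_val (\<lambda>i. if i < j then w i else i = j)"
    using bin_val_split[of "\<lambda>i. if i < j then w i else i = j" "Suc j"]
          bin_val_split[of "\<lambda>i. if i < j then w i else j < i" "Suc j"]
    by (simp add: bin_val_True bin_val_False bin_term_def)
qed

text \<open>A dyadic number is re-expanded with a tail of 1's.\<close>
lemma beta_eventually_zero:
  assumes "\<forall>i\<ge>c. \<not> w i"
  shows "bin_val w = 0 \<or> (\<exists>M\<le>c. 0 < bin_val w \<and> (\<forall>i\<ge>M. beta (bin_val w) i))"
  using assms
proof (induction c)
  case 0
  hence "w = (\<lambda>_. False)" by auto
  thus ?case by (simp add: bin_val_False)
next
  case (Suc c)
  show ?case
  proof (cases "w c")
    case True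
    have "w = (\<lambda>i. if i < c then w i else i = c)"
    proof
      fix i show "w i = (if i < c then w i else i = c)"
        using Suc.prems True by (cases i c rule: linorder_cases) auto
    qed
    hence "beta (bin_val w) = (\<lambda>i. if i < c then w i else c < i)"
      using beta_trailing_one[of c w] by simp
    thus ?thesis using bin_val_pos[of w c] True by (intro disjI2 exI[of _ "Suc c"]) auto
  next
    case False
    hence "\<forall>i\<ge>c. \<not> w i" using Suc.prems by (metis le_eq_less_or_eq Suc_le_eq)
    thus ?thesis using Suc.IH by (meson le_SucI)
  qed
qed

lemma R_cases_periodic_rho:
  assumes x: "0 < x" and per: "periodic_from (rho (beta x)) c q"
  shows "R x = 0
    \<or> (\<exists>M\<le>c. periodic_from (beta (R x)) M 1 \<and> ones_in (beta (R x)) M 1 = 1)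
    \<or> (beta (R x) = rho (beta x) \<and> 0 < ones_in (rho (beta x)) c q \<and> ones_in (rho (beta x)) c q < q)"
proof -
  define r where "r = rho (beta x)"
  have Rx: "R x = bin_val r" using x by (simp add: R_def r_def)
  have tail_ones: "periodic_from b M 1 \<and> ones_in b M 1 = 1" if "\<forall>i\<ge>M. b i" for b M
    using that by (simp add: periodic_from_def ones_in_1)
  consider "ones_in r c q = 0" | "ones_in r c q = q" | "0 < ones_in r c q" "ones_in r c q < q"
    using ones_in_le[of r c q] by linarith
  thus ?thesis
  proof cases
    case 1
    hence "\<forall>i\<ge>c. \<not> r i" using periodic_from_no_ones[OF per[folded r_def]] by simp
    from beta_eventually_zero[OF this] show ?thesis
    proof
      assume "\<exists>M\<le>c. 0 < bin_val r \<and> (\<forall>i\<ge>M. beta (bin_val r) i)"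
      then obtain M where "M \<le> c" "\<forall>i\<ge>M. beta (R x) i" using Rx by auto
      thus ?thesis using tail_ones[of M "beta (R x)"] by blast
    qed (simp add: Rx)
  next
    case 2
    hence ones: "\<forall>i\<ge>c. r i" using periodic_from_all_ones[OF per[folded r_def]] by simp
    have "0 < ones_in r c q" using 2 per by (simp add: periodic_from_def)
    hence "beta (R x) = r"
      using beta_R[OF x] infinite_ones_periodic[OF per[folded r_def]] by (simp add: r_def)
    thus ?thesis using tail_ones[OF ones] by auto
  next
    case 3
    hence "beta (R x) = r"
      using beta_R[OF x] infinite_ones_periodic[OF per[folded r_def]] by (simp add: r_def)
    thus ?thesis using 3 by (simp add: r_def)
  qed
qed

text \<open>The first component, the number \<open>K\<close> of 1's per period, never increases under \<open>rho\<close>.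
  For \<open>K \<ge> 2\<close> the second one records that \<open>rho\<close> doubles an odd period (making it even) but
  keeps an even one; for \<open>K = 1\<close> it bounds the preperiod, which \<open>rho\<close> does not enlarge.\<close>
definition descent_measure :: "(nat \<Rightarrow> bool) \<Rightarrow> nat \<Rightarrow> nat \<Rightarrow> nat \<times> nat" where
  "descent_measure b N p = (let K = ones_in b N p in
     (K, if K = 1 then (if p = 1 then 2 * N else if even p then 2 * N + 1 else 2 * N + 2)
         else if odd p then 1 else 0))"

lemma descent_measure_tail_ones: "ones_in b M 1 = 1 \<Longrightarrow> descent_measure b M 1 = (1, 2 * M)"
  by (simp add: descent_measure_def)

abbreviation descent_less :: "((nat \<times> nat) \<times> (nat \<times> nat)) set" where
  "descent_less \<equiv> less_than <*lex*> less_than"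

lemma descent_via_rho:
  assumes x: "0 < x" and per: "periodic_from (rho (beta x)) c q"
    and tail: "\<And>M. M \<le> c \<Longrightarrow> ((1, 2 * M), t) \<in> descent_less"
    and mid: "0 < ones_in (rho (beta x)) c q \<Longrightarrow> ones_in (rho (beta x)) c q < q
               \<Longrightarrow> (descent_measure (rho (beta x)) c q, t) \<in> descent_less"
  shows "R x = 0 \<or> (\<exists>N' p'. periodic_from (beta (R x)) N' p'
                      \<and> (descent_measure (beta (R x)) N' p', t) \<in> descent_less)"
  using R_cases_periodic_rho[OF x per]
proof (elim disjE exE conjE)
  fix M assume "M \<le> c" "periodic_from (beta (R x)) M 1" "ones_in (beta (R x)) M 1 = 1"
  thus ?thesis using tail[of M] descent_measure_tail_ones by metis
next
  assume "beta (R x) = rho (beta x)" "0 < ones_in (rho (beta x)) c q" "ones_in (rho (beta x)) c q < q"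
  thus ?thesis using per mid by auto
qed simp

lemma tail_ones_start:
  fixes b :: "nat \<Rightarrow> bool"
  shows "\<forall>i\<ge>N. b i \<Longrightarrow> \<exists>M\<le>N. (\<forall>i\<ge>M. b i) \<and> (M = 0 \<or> \<not> b (M - 1))"
proof (induction N)
  case (Suc N)
  show ?case
  proof (cases "b N")
    case True
    hence "\<forall>i\<ge>N. b i" using Suc.prems by (metis le_eq_less_or_eq Suc_le_eq)
    thus ?thesis using Suc.IH le_SucI by blast
  qed (use Suc.prems in auto)
qed auto

lemma descent_step_tail_ones:
  assumes x: "0 < x" "x < 1" and ones: "\<forall>i\<ge>N. beta x i"
  shows "R x = 0 \<or> (\<exists>N' p'. periodic_from (beta (R x)) N' p'
           \<and> (descent_measure (beta (R x)) N' p', (1, 2 * N)) \<in> descent_less)"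
proof -
  have inf: "infinite {i. beta x i}" using infinite_beta x by simp
  obtain M where M: "M \<le> N" "\<forall>i\<ge>M. beta x i" "M = 0 \<or> \<not> beta x (M - 1)"
    using tail_ones_start[OF ones] by blast
  have "M \<noteq> 0"
  proof
    assume "M = 0"
    hence "beta x = (\<lambda>_. True)" using M by auto
    thus False using bin_val_beta[of x] bin_val_True x by simp
  qed
  define c where "c = ones_below (beta x) M"
  have per_M: "periodic_from (beta x) M 1" "ones_in (beta x) M 1 = 1"
    using M(2) by (simp_all add: periodic_from_def ones_in_1)
  have "c = ones_below (beta x) (M - 1)"
    using M(3) \<open>M \<noteq> 0\<close> ones_below_Suc[of "beta x" "M - 1"] by (simp add: c_def)
  hence "c < N" using ones_below_le[of "beta x" "M - 1"] \<open>M \<noteq> 0\<close> M(1) by simp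
  have per_r: "periodic_from (rho (beta x)) c 2" "ones_in (rho (beta x)) c 2 = 1"
    using periodic_from_rho_odd[OF inf per_M(1)] per_M(2) by (simp_all add: c_def)
  show ?thesis
  proof (rule descent_via_rho[OF x(1) per_r(1)])
    show "((1, 2 * M'), (1, 2 * N)) \<in> descent_less" if "M' \<le> c" for M'
      using that \<open>c < N\<close> by simp
    show "(descent_measure (rho (beta x)) c 2, (1, 2 * N)) \<in> descent_less"
      using \<open>c < N\<close> per_r(2) by (simp add: descent_measure_def)
  qed
qed

lemma descent_step:
  assumes x: "0 < x" "x < 1" and per: "periodic_from (beta x) N p"
  shows "R x = 0 \<or> (\<exists>N' p'. periodic_from (beta (R x)) N' p'
           \<and> (descent_measure (beta (R x)) N' p', descent_measure (beta x) N p) \<in> descent_less)"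
proof -
  define K where "K = ones_in (beta x) N p"
  define c where "c = ones_below (beta x) N"
  have inf: "infinite {i. beta x i}" using infinite_beta x by simp
  have "0 < K" using ones_in_pos[OF per inf] by (simp add: K_def)
  have "c \<le> N" using ones_below_le by (simp add: c_def)
  consider "K = 1" "p = 1" | "K \<noteq> 1 \<or> p \<noteq> 1" "even p" | "K \<noteq> 1 \<or> p \<noteq> 1" "odd p"
    by blast
  thus ?thesis
  proof cases
    case 1
    hence "\<forall>i\<ge>N. beta x i" using periodic_from_all_ones[OF per] by (simp add: K_def)
    moreover have "descent_measure (beta x) N p = (1, 2 * N)"
      using 1 by (simp add: descent_measure_def K_def)
    ultimately show ?thesis using descent_step_tail_ones[OF x] by simp
  next
    case 2
    have per_r: "periodic_from (rho (beta x)) c K"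
      using periodic_from_rho_even[OF inf per 2(2)] by (simp add: K_def c_def)
    show ?thesis
    proof (rule descent_via_rho[OF x(1) per_r])
      show "((1, 2 * M), descent_measure (beta x) N p) \<in> descent_less" if "M \<le> c" for M
        using that 2 \<open>c \<le> N\<close> \<open>0 < K\<close> by (auto simp: descent_measure_def K_def[symmetric])
      show "(descent_measure (rho (beta x)) c K, descent_measure (beta x) N p) \<in> descent_less"
        if "ones_in (rho (beta x)) c K < K"
        using that by (simp add: descent_measure_def K_def[symmetric] Let_def)
    qed
  next
    case 3
    have per_r: "periodic_from (rho (beta x)) c (2 * K)" "ones_in (rho (beta x)) c (2 * K) = K"
      using periodic_from_rho_odd[OF inf per 3(2)] by (simp_all add: K_def c_def)
    show ?thesis
    proof (rule descent_via_rho[OF x(1) per_r(1)])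
      show "((1, 2 * M), descent_measure (beta x) N p) \<in> descent_less" if "M \<le> c" for M
        using that 3 \<open>c \<le> N\<close> \<open>0 < K\<close> by (auto simp: descent_measure_def K_def[symmetric])
      show "(descent_measure (rho (beta x)) c (2 * K), descent_measure (beta x) N p) \<in> descent_less"
        using 3 \<open>c \<le> N\<close> per_r(2) by (auto simp: descent_measure_def K_def[symmetric])
    qed
  qed
qed

lemma periodic_reaches_cycle:
  assumes "0 < x" "x \<le> 1" "periodic_from (beta x) N p"
  shows "\<exists>k. (R ^^ k) x \<in> C0 \<union> C1"
  using assms
proof (induction "descent_measure (beta x) N p" arbitrary: x N p
       rule: wf_induct_rule[OF wf_lex_prod[OF wf_less_than wf_less_than]])
  case 1
  show ?case
  proof (cases "x = 1")
    case True
    hence "(R ^^ 0) x \<in> C1" by (simp add: C1_def)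
    thus ?thesis by blast
  next
    case False
    hence "x < 1" using "1.prems" by simp
    show ?thesis
    proof (cases "R x = 0")
      case True
      hence "(R ^^ 1) x \<in> C0" by (simp add: C0_def)
      thus ?thesis by blast
    next
      case False
      obtain N' p' where "periodic_from (beta (R x)) N' p'"
        "(descent_measure (beta (R x)) N' p', descent_measure (beta x) N p) \<in> descent_less"
        using descent_step[OF "1.prems"(1) \<open>x < 1\<close> "1.prems"(3)] False by blast
      then obtain k where "(R ^^ k) (R x) \<in> C0 \<union> C1"
        using "1.hyps" R_bounds[of x] False by force
      thus ?thesis by (metis funpow_Suc_right o_apply)
    qed
  qed
qed

section \<open>The 2-cycles and the partition of the rationals\<close>

lemma bin_val_period_2:
  assumes "\<And>i. c (i + 2) = c i"
  shows "bin_val c = 4/3 * (bin_term c 0 + bin_term c 1)"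
proof -
  have "shift_word 2 c = c" using assms by auto
  hence "bin_val c = (bin_term c 0 + bin_term c 1) + bin_val c / 4"
    using bin_val_split[of c 2] by (simp add: numeral_2_eq_2)
  thus ?thesis by simp
qed

lemma bin_val_even: "bin_val even = 2/3"
  using bin_val_period_2[of even] by (simp add: bin_term_def)

lemma bin_val_odd: "bin_val odd = 1/3"
  using bin_val_period_2[of odd] by (simp add: bin_term_def)

lemma infinite_even: "infinite {i::nat. even i}"
  unfolding infinite_nat_iff_unbounded_le by (metis dvd_triv_left le_add2 mem_Collect_eq mult_2)

lemma infinite_odd: "infinite {i::nat. odd i}"
  unfolding infinite_nat_iff_unbounded_le
  by (metis dvd_triv_left even_Suc le_add2 le_SucI mem_Collect_eq mult_2)

lemma enumerate_UNIV_nat: "enumerate (UNIV::nat set) k = k"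
proof -
  have "ones_below (\<lambda>_. True) k = k" by (induction k) (simp_all add: ones_below_Suc)
  thus ?thesis using enumerate_ones_below[of "\<lambda>_. True" k] by simp
qed

lemma enumerate_even: "enumerate {i::nat. even i} k = 2 * k"
proof -
  have "ones_below even (2 * k) = k" by (induction k) (simp_all add: ones_below_Suc)
  thus ?thesis using enumerate_ones_below[of even "2 * k"] infinite_even by simp
qed

lemma enumerate_odd: "enumerate {i::nat. odd i} k = 2 * k + 1"
proof -
  have "ones_below odd (2 * k + 1) = k" by (induction k) (simp_all add: ones_below_Suc)
  thus ?thesis using enumerate_ones_below[of odd "2 * k + 1"] infinite_odd by simp
qed

lemma R_0: "R 0 = 2/3"
  by (simp add: R_def)

lemma R_two_thirds: "R (2/3) = 0"
proof -
  have "beta (2/3) = even" using beta_eqI[OF _ bin_val_even] infinite_even by simp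
  moreover have "rho even = (\<lambda>_. False)" by (simp add: rho_def enumerate_even fun_eq_iff)
  ultimately show ?thesis by (simp add: R_def bin_val_False)
qed

lemma R_1: "R 1 = 1/3"
proof -
  have "beta 1 = (\<lambda>_. True)" using beta_eqI[OF _ bin_val_True] by simp
  moreover have "rho (\<lambda>_. True) = odd" by (simp add: rho_def enumerate_UNIV_nat fun_eq_iff)
  ultimately show ?thesis by (simp add: R_def bin_val_odd)
qed

lemma R_one_third: "R (1/3) = 1"
proof -
  have "beta (1/3) = odd" using beta_eqI[OF _ bin_val_odd] infinite_odd by simp
  moreover have "rho odd = (\<lambda>_. True)" by (simp add: rho_def enumerate_odd fun_eq_iff)
  ultimately show ?thesis by (simp add: R_def bin_val_True)
qed

lemma mem_orbit_iff: "y \<in> orbit x \<longleftrightarrow> (\<exists>k. y = (R ^^ k) x)"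
  by (auto simp: orbit_def)

lemma orbit_funpow_subset: "orbit ((R ^^ k) x) \<subseteq> orbit x"
  by (auto simp: mem_orbit_iff) (metis comp_apply funpow_add)

lemma orbit_R_subset: "orbit (R x) \<subseteq> orbit x"
  using orbit_funpow_subset[of 1 x] by simp

lemma orbit_two_cycle:
  assumes "R a = b" "R b = a" "y \<in> {a, b}"
  shows "orbit y = {a, b}"
proof
  have "(R ^^ k) y \<in> {a, b}" for k
    by (induction k) (use assms in auto)
  thus "orbit y \<subseteq> {a, b}" unfolding orbit_def by blast
  have "y \<in> orbit y" "R y \<in> orbit y"
    unfolding mem_orbit_iff by (metis funpow_0, metis funpow_0 funpow_Suc_right comp_apply)
  thus "{a, b} \<subseteq> orbit y" using assms by auto
qed

lemma orbit_C0: "y \<in> C0 \<Longrightarrow> orbit y = C0"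
  unfolding C0_def using orbit_two_cycle R_0 R_two_thirds by blast

lemma orbit_C1: "y \<in> C1 \<Longrightarrow> orbit y = C1"
  unfolding C1_def using orbit_two_cycle R_1 R_one_third by blast

lemma orbits_intersect:
  assumes "y \<in> orbit x" "z \<in> orbit x"
  shows "orbit y \<inter> orbit z \<noteq> {}"
proof -
  obtain a b where "y = (R ^^ a) x" "z = (R ^^ b) x" using assms by (auto simp: mem_orbit_iff)
  hence "(R ^^ b) y = (R ^^ a) z" by (metis add.commute comp_apply funpow_add)
  hence "(R ^^ b) y \<in> orbit y \<inter> orbit z" unfolding mem_orbit_iff Int_iff by metis
  thus ?thesis by blast
qed

lemma periodic_point_in_orbit:
  assumes "(R ^^ p) x = x" "1 \<le> p" "y \<in> orbit x"
  shows "x \<in> orbit y"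
proof -
  obtain a where y: "y = (R ^^ a) x" using assms(3) by (auto simp: mem_orbit_iff)
  have "(R ^^ (p * a)) x = x" by (induction a) (simp_all add: funpow_add assms(1))
  moreover have "p * a = (p * a - a) + a" using assms(2) by simp
  ultimately have "x = (R ^^ (p * a - a)) y" by (metis y comp_apply funpow_add)
  thus ?thesis by (auto simp: mem_orbit_iff)
qed

lemma R_QQ: "R ` QQ \<subseteq> QQ"
proof clarify
  fix x assume x: "x \<in> QQ"
  show "R x \<in> QQ"
  proof (cases "x = 0")
    case False
    hence x': "x \<in> \<rat>" "0 < x" "x \<le> 1" using x by (auto simp: QQ_def)
    obtain N p where per: "periodic_from (beta x) N p" using periodic_from_beta_Rats[OF x'] by blast
    have inf: "infinite {i. beta x i}" using infinite_beta[OF x'(2,3)] .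
    have "\<exists>c q. periodic_from (rho (beta x)) c q"
      using periodic_from_rho_even[OF inf per] periodic_from_rho_odd[OF inf per] by blast
    hence "R x \<in> \<rat>" using bin_val_periodic_Rats x'(2) by (auto simp: R_def)
    thus ?thesis using R_bounds[of x] by (simp add: QQ_def)
  qed (simp add: R_0 QQ_def)
qed

lemma QQ_subset_QQ0_QQ1: "QQ \<subseteq> QQ0 \<union> QQ1"
proof
  fix x assume x: "x \<in> QQ"
  have "\<exists>k. (R ^^ k) x \<in> C0 \<union> C1"
  proof (cases "x = 0")
    case True
    hence "(R ^^ 0) x \<in> C0" by (simp add: C0_def)
    thus ?thesis by blast
  next
    case False
    hence x': "x \<in> \<rat>" "0 < x" "x \<le> 1" using x by (auto simp: QQ_def)
    thus ?thesis using periodic_from_beta_Rats[OF x'] periodic_reaches_cycle by blast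
  qed
  thus "x \<in> QQ0 \<union> QQ1"
    using x orbit_C0 orbit_C1 orbit_funpow_subset by (auto simp: QQ0_def QQ1_def) blast+
qed

lemma QQ0_QQ1_disjoint: "QQ0 \<inter> QQ1 = {}"
proof -
  have "orbit 0 \<inter> orbit 1 = {}" using orbit_C0 orbit_C1 by (simp add: C0_def C1_def)
  thus ?thesis using orbits_intersect by (fastforce simp: QQ0_def QQ1_def C0_def C1_def)
qed

lemma periodic_orbit_QQ:
  assumes "x \<in> QQ" "1 \<le> p" "(R ^^ p) x = x"
  shows "orbit x = C0 \<or> orbit x = C1"
proof -
  have "C0 \<subseteq> orbit x \<or> C1 \<subseteq> orbit x" using assms(1) QQ_subset_QQ0_QQ1 by (auto simp: QQ0_def QQ1_def)
  then obtain y where "y \<in> orbit x" "y \<in> C0 \<and> orbit y = C0 \<or> y \<in> C1 \<and> orbit y = C1"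
    using orbit_C0 orbit_C1 by (auto simp: C0_def C1_def)
  thus ?thesis using periodic_point_in_orbit[OF assms(3,2)] orbit_C0 orbit_C1 by blast
qed

section \<open>Density\<close>

text \<open>Putting the \<open>k\<close>-th 1 after position \<open>n\<close> at a position of parity \<open>e k\<close> makes \<open>rho\<close>
  output the digit \<open>e k\<close> there.\<close>
primrec one_positions :: "(nat \<Rightarrow> bool) \<Rightarrow> nat \<Rightarrow> nat \<Rightarrow> nat" where
  "one_positions e n 0 = n + (if odd n = e 0 then 0 else 1)"
| "one_positions e n (Suc k) = one_positions e n k + (if e (Suc k) = e k then 2 else 1)"

lemma odd_one_positions: "odd (one_positions e n k) = e k"
  by (induction k) auto

lemma one_positions_ge: "n \<le> one_positions e n k"
  by (induction k) auto

lemma one_positions_not_less: "\<not> one_positions e n k < n"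
  using one_positions_ge by (simp add: not_less)

lemma strict_mono_one_positions: "strict_mono (one_positions e n)"
  by (rule strict_mono_Suc_iff[THEN iffD2]) auto

lemma one_positions_periodic:
  assumes per: "periodic_from e N p" and "N \<le> k"
  shows "one_positions e n (k + p) = one_positions e n k + (one_positions e n (N + p) - one_positions e n N)"
  using assms(2)
proof (induction k rule: dec_induct)
  case base
  show ?case using strict_mono_one_positions[of e n] by (simp add: strict_mono_less_eq)
next
  case (step k)
  have "\<forall>i\<ge>N. e (i + p) = e i" using per by (simp add: periodic_from_def)
  hence "e (Suc k + p) = e (Suc k)" "e (k + p) = e k" using step.hyps(1) le_SucI by blast+
  thus ?case using step.IH by simp
qed

definition rho_lift :: "nat \<Rightarrow> (nat \<Rightarrow> bool) \<Rightarrow> (nat \<Rightarrow> bool) \<Rightarrow> nat \<Rightarrow> bool" where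
  "rho_lift n u e i \<longleftrightarrow> (if i < n then u i else i \<in> range (one_positions e n))"

lemma infinite_rho_lift: "infinite {i. rho_lift n u e i}"
proof -
  have "range (one_positions e n) \<subseteq> {i. rho_lift n u e i}"
    using one_positions_not_less[of e n] by (auto simp: rho_lift_def)
  thus ?thesis
    using range_inj_infinite[OF strict_mono_imp_inj_on[OF strict_mono_one_positions]] finite_subset
    by blast
qed

lemma ones_below_rho_lift: "ones_below (rho_lift n u e) (one_positions e n j) = ones_below u n + j"
proof -
  let ?pos = "one_positions e n"
  have "{i. i < ?pos j \<and> rho_lift n u e i} = {i. i < n \<and> u i} \<union> ?pos ` {..<j}"
    using one_positions_ge[of n e] one_positions_not_less[of e n] strict_mono_one_positions[of e n]
    by (auto simp: rho_lift_def strict_mono_less intro: less_le_trans)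
  moreover have "{i. i < n \<and> u i} \<inter> ?pos ` {..<j} = {}"
    using one_positions_ge[of n e] by (auto simp: not_less[symmetric])
  moreover have "card (?pos ` {..<j}) = j"
    using strict_mono_imp_inj_on[OF strict_mono_one_positions] by (simp add: card_image inj_on_subset)
  ultimately show ?thesis by (simp add: ones_below_def card_Un_disjoint)
qed

lemma rho_rho_lift_suffix: "rho (rho_lift n u e) (ones_below u n + j) = e j"
proof -
  have "rho_lift n u e (one_positions e n j)"
    using one_positions_ge[of n e j] by (auto simp: rho_lift_def)
  hence "enumerate {i. rho_lift n u e i} (ones_below u n + j) = one_positions e n j"
    using enumerate_ones_below[OF infinite_rho_lift] ones_below_rho_lift by metis
  thus ?thesis by (simp add: rho_def odd_one_positions)
qed

lemma rho_prefix_eq: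
  assumes inf: "infinite {i. b i}" "infinite {i. c i}" and agree: "\<forall>i<n. b i = c i"
    and k: "k < ones_below b n"
  shows "rho b k = rho c k"
proof -
  define s where "s = enumerate {i. b i} k"
  have s: "b s" "ones_below b s = k"
    using enumerate_in_set[OF inf(1)] ones_below_enumerate[OF inf(1)] by (simp_all add: s_def)
  have "s < n"
  proof (rule ccontr)
    assume "\<not> s < n"
    hence "ones_below b n \<le> ones_below b s" by (intro ones_below_mono) simp
    thus False using k s by simp
  qed
  hence "c s" "ones_below c s = k"
    using agree s by (auto simp: ones_below_def intro!: arg_cong[where f = card])
  hence "enumerate {i. c i} k = s" using enumerate_ones_below[OF inf(2)] by metis
  thus ?thesis by (simp add: rho_def s_def)
qed

lemma rho_lift_prefix:
  assumes "infinite {i. u i}" "k < ones_below u n"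
  shows "rho (rho_lift n u e) k = rho u k"
proof -
  have agree: "\<forall>i<n. rho_lift n u e i = u i" by (simp add: rho_lift_def)
  hence "ones_below (rho_lift n u e) n = ones_below u n"
    by (auto simp: ones_below_def intro!: arg_cong[where f = card])
  thus ?thesis using rho_prefix_eq[OF infinite_rho_lift assms(1) agree] assms(2) by simp
qed

lemma periodic_from_rho_lift:
  assumes per: "periodic_from e N p"
  shows "\<exists>D. periodic_from (rho_lift n u e) (one_positions e n N) D"
proof
  let ?pos = "one_positions e n"
  define D where "D = ?pos (N + p) - ?pos N"
  have mono: "strict_mono ?pos" by (rule strict_mono_one_positions)
  have shift: "?pos (k + p) = ?pos k + D" if "N \<le> k" for k
    unfolding D_def by (rule one_positions_periodic[OF per that])
  have "0 < D" using mono per by (simp add: D_def strict_mono_less periodic_from_def)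
  have "i + D \<in> range ?pos \<longleftrightarrow> i \<in> range ?pos" if "?pos N \<le> i" for i
  proof
    assume "i + D \<in> range ?pos"
    then obtain k where k: "?pos k = i + D" by auto
    hence "?pos (N + p) \<le> ?pos k" using that shift[of N] by simp
    hence "N + p \<le> k" using mono by (simp add: strict_mono_less_eq)
    hence "?pos (k - p) = i" using k shift[of "k - p"] by simp
    thus "i \<in> range ?pos" by (metis rangeI)
  next
    assume "i \<in> range ?pos"
    then obtain k where k: "?pos k = i" by auto
    hence "N \<le> k" using that mono by (metis strict_mono_less_eq)
    thus "i + D \<in> range ?pos" using shift k by (metis rangeI)
  qed
  moreover have "n \<le> ?pos N" by (rule one_positions_ge)
  ultimately show "periodic_from (rho_lift n u e) (?pos N) D"
    using \<open>0 < D\<close> by (auto simp: periodic_from_def rho_lift_def)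
qed

lemma R_preimage_with_prefix:
  assumes u: "infinite {i. u i}" and y: "y \<in> QQ" "0 < y"
    and agree: "\<forall>k < ones_below u n. beta y k = rho u k"
  shows "\<exists>x\<in>QQ. 0 < x \<and> (\<forall>i<n. beta x i = u i) \<and> R x = y"
proof -
  define m where "m = ones_below u n"
  define e where "e = shift_word m (beta y)"
  define b where "b = rho_lift n u e"
  have y': "y \<in> \<rat>" "y \<le> 1" using y(1) by (auto simp: QQ_def)
  obtain N p where "periodic_from (beta y) N p" using periodic_from_beta_Rats[OF y' (1) y(2) y'(2)] by blast
  hence "periodic_from e (N - m) p"
    unfolding periodic_from_def e_def shift_word_apply by (metis add.commute add.left_commute le_diff_conv)
  then obtain D N' where per: "periodic_from b N' D" using periodic_from_rho_lift b_def by blast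
  have "rho b = beta y"
  proof
    fix k show "rho b k = beta y k"
    proof (cases "k < m")
      case True
      thus ?thesis using rho_lift_prefix[OF u] agree by (simp add: b_def m_def)
    next
      case False
      then obtain j where "k = m + j" using le_Suc_ex not_less by blast
      thus ?thesis using rho_rho_lift_suffix by (simp add: b_def e_def m_def add.commute)
    qed
  qed
  define x where "x = bin_val b"
  have inf: "infinite {i. b i}" by (simp add: b_def infinite_rho_lift)
  hence beta_x: "beta x = b" by (simp add: x_def beta_eqI)
  have "0 < x" using not_finite_existsD[OF inf] bin_val_pos by (auto simp: x_def)
  moreover have "x \<in> QQ"
    using bin_val_periodic_Rats[OF per] bin_val_nonneg bin_val_le_1 by (simp add: QQ_def x_def)
  moreover have "R x = y"
    using \<open>0 < x\<close> \<open>rho b = beta y\<close> bin_val_beta[OF y(2) y'(2)] by (simp add: R_def beta_x)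
  moreover have "\<forall>i<n. beta x i = u i" by (simp add: beta_x b_def rho_lift_def)
  ultimately show ?thesis by blast
qed

text \<open>The prefix \<open>u\<close> of length \<open>n\<close> is obtained by \<open>R_preimage_with_prefix\<close> from the prefix of
  length \<open>ones_below u n\<close> that \<open>rho\<close> makes of it; that prefix is shorter, or equally long but
  starting with 0 where \<open>u\<close> consists of 1's only.\<close>
lemma QQ_orbit_prefix:
  assumes base: "z \<in> QQ" "0 < z" "C \<subseteq> orbit z"
  shows "\<exists>x\<in>QQ. 0 < x \<and> (\<forall>i<n. beta x i = u i) \<and> C \<subseteq> orbit x"
proof (induction "2 * n + (if \<forall>i<n. u i then 1 else 0)" arbitrary: n u rule: less_induct)
  case less
  show ?case
  proof (cases "n = 0")
    case True
    thus ?thesis using base by auto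
  next
    case False
    define u' where "u' = (\<lambda>i. if i < n then u i else True)"
    define m where "m = ones_below u' n"
    have inf: "infinite {i. u' i}"
      using infinite_Ici[of n] by (rule infinite_super[rotated]) (auto simp: u'_def)
    have dec: "2 * m + (if \<forall>i<m. rho u' i then 1 else 0) < 2 * n + (if \<forall>i<n. u i then 1 else 0)"
    proof (cases "\<forall>i<n. u i")
      case True
      hence "u' = (\<lambda>_. True)" by (auto simp: u'_def)
      hence "m = n" "\<not> rho u' 0"
        by (simp_all add: m_def ones_below_def rho_def enumerate_UNIV_nat)
      thus ?thesis using True False by auto
    next
      case False
      then obtain i where "i < n" "\<not> u' i" by (auto simp: u'_def)
      hence "m < n" using ones_below_less by (simp add: m_def)
      thus ?thesis using False by simp
    qed
    obtain y where y: "y \<in> QQ" "0 < y" "\<forall>k<m. beta y k = rho u' k" "C \<subseteq> orbit y"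
      using less[OF dec] by blast
    obtain x where "x \<in> QQ" "0 < x" "\<forall>i<n. beta x i = u' i" "R x = y"
      using R_preimage_with_prefix[OF inf y(1,2)] y(3) by (auto simp: m_def)
    thus ?thesis using y(4) orbit_R_subset[of x] by (auto simp: u'_def)
  qed
qed

lemma bin_val_prefix_dist:
  assumes "\<forall>i<n. a i = b i"
  shows "dist (bin_val a) (bin_val b) \<le> (1/2) ^ n"
proof -
  have "(\<Sum>i<n. bin_term a i) = (\<Sum>i<n. bin_term b i)"
    using assms by (auto simp: bin_term_def)
  hence "bin_val a - bin_val b = (bin_val (shift_word n a) - bin_val (shift_word n b)) / 2 ^ n"
    using bin_val_split[of a n] bin_val_split[of b n] by (simp add: diff_divide_distrib)
  moreover have "\<bar>bin_val (shift_word n a) - bin_val (shift_word n b)\<bar> \<le> 1"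
    using bin_val_nonneg[of "shift_word n a"] bin_val_le_1[of "shift_word n a"]
          bin_val_nonneg[of "shift_word n b"] bin_val_le_1[of "shift_word n b"] by linarith
  ultimately show ?thesis by (simp add: dist_real_def divide_right_mono power_one_over)
qed

lemma closure_QQ_orbit:
  assumes "z \<in> QQ" "0 < z" "C \<subseteq> orbit z"
  shows "{0..1} \<subseteq> closure {x \<in> QQ. C \<subseteq> orbit x}"
proof
  fix y :: real assume y: "y \<in> {0..1}"
  show "y \<in> closure {x \<in> QQ. C \<subseteq> orbit x}"
    unfolding closure_approachable
  proof (intro allI impI)
    fix \<epsilon> :: real assume "0 < \<epsilon>"
    then obtain n where n: "(1/2::real) ^ n < \<epsilon>" using real_arch_pow_inv[of \<epsilon> "1/2"] by auto
    define a where "a = (if 0 < y then beta y else (\<lambda>_. False))"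
    have a: "bin_val a = y" using y bin_val_beta[of y] by (auto simp: a_def bin_val_False)
    obtain x where x: "x \<in> QQ" "0 < x" "\<forall>i<n. beta x i = a i" "C \<subseteq> orbit x"
      using QQ_orbit_prefix[OF assms] by blast
    have "bin_val (beta x) = x" using bin_val_beta x(1,2) by (simp add: QQ_def)
    hence "dist x y \<le> (1/2) ^ n" using bin_val_prefix_dist[OF x(3)] a by simp
    thus "\<exists>x'\<in>{x \<in> QQ. C \<subseteq> orbit x}. dist x' y < \<epsilon>" using x n by force
  qed
qed

theorem proposition6p3:
  shows "R ` QQ \<subseteq> QQ
    \<and> (R 0 = 2/3 \<and> R (2/3) = 0 \<and> R 1 = 1/3 \<and> R (1/3) = 1)
    \<and> (\<forall>x p. x \<in> QQ \<and> orbit x \<subseteq> QQ \<and> p \<ge> (1::nat) \<and> (R ^^ p) x = x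
           \<longrightarrow> orbit x = C0 \<or> orbit x = C1)
    \<and> QQ = QQ0 \<union> QQ1
    \<and> QQ0 \<inter> QQ1 = {}
    \<and> {0..1} \<subseteq> closure QQ0
    \<and> {0..1} \<subseteq> closure QQ1"
proof -
  have "{0..1} \<subseteq> closure QQ0"
    using closure_QQ_orbit[of "2/3" C0] orbit_C0[of "2/3"] by (simp add: QQ_def QQ0_def C0_def)
  moreover have "{0..1} \<subseteq> closure QQ1"
    using closure_QQ_orbit[of 1 C1] orbit_C1[of 1] by (simp add: QQ_def QQ1_def C1_def)
  moreover have "QQ = QQ0 \<union> QQ1" using QQ_subset_QQ0_QQ1 by (auto simp: QQ0_def QQ1_def)
  ultimately show ?thesis
    using R_QQ R_0 R_two_thirds R_1 R_one_third periodic_orbit_QQ QQ0_QQ1_disjoint by blast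
qed

end
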